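(* Let $m\in\mathbb{Z}_{\ge0}$. In $\mathbb{R}^{2m+6}$ with standard basis $e_0,\ldots,e_{2m+5}$, let $\rho=\frac12\sum_re_r$, $v_S=\sum_{r\in S}e_r$ for $S\subset\{0,\ldots,2m+5\}$ with $|S|=m+1$, and $w_{ij}=\rho-e_i-e_j$. Let $P^{(m)}$ be the convex hull of all $v_S$ and all $w_{ij}$ ($0\le i<j\le 2m+5$); $P_{\rm I}$ the convex hull of all $v_S$; $P_{\rm II}$ the convex hull of the $v_S$ with $S\subset\{1,\ldots,2m+5\}$ and the $w_{0j}$ ($1\le j\le 2m+5$); $P_{\rm III}$ the convex hull of the $v_S$ with $S\subset\{3,\ldots,2m+5\}$ and the $w_{ij}$ ($0\le i<j\le2$). For $\sigma\in S_{2m+6}$ acting by permuting coordinates, write $\sigma(A)=\{\sigma(a):a\in A\}$. Then \[P^{(m)}=P_{\rm I}\cup\bigcup_{\sigma\in S_{2m+6}}\sigma(P_{\rm II})\cup\bigcup_{\sigma\in S_{2m+6}}\sigma(P_{\rm III}).\] *)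

theory Defs
  imports "HOL-Analysis.Analysis"
begin

text \<open>Vectors of R^N are modelled as functions nat => real, supported on {0..<N}.
  Convex hull: the set of all finite convex combinations of points of A.\<close>

definition cvx_hull :: "(nat \<Rightarrow> real) set \<Rightarrow> (nat \<Rightarrow> real) set" where
  "cvx_hull A = {x. \<exists>F u. finite F \<and> F \<subseteq> A \<and> F \<noteq> {} \<and> (\<forall>a\<in>F. 0 \<le> u a) \<and>
      sum u F = 1 \<and> x = (\<lambda>k. \<Sum>a\<in>F. u a * a k)}"

definition e_vec :: "nat \<Rightarrow> nat \<Rightarrow> real" where
  "e_vec r = (\<lambda>k. if k = r then 1 else 0)"

definition rho_vec :: "nat \<Rightarrow> nat \<Rightarrow> real" where
  "rho_vec N = (\<lambda>k. \<Sum>r<N. (1/2) * e_vec r k)"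

definition v_vec :: "nat set \<Rightarrow> nat \<Rightarrow> real" where
  "v_vec S = (\<lambda>k. \<Sum>r\<in>S. e_vec r k)"

definition w_vec :: "nat \<Rightarrow> nat \<Rightarrow> nat \<Rightarrow> nat \<Rightarrow> real" where
  "w_vec N i j = (\<lambda>k. rho_vec N k - e_vec i k - e_vec j k)"

text \<open>A permutation sigma of {0..<N} acts by permuting coordinates, sigma(e_r) = e_(sigma r).\<close>
definition perm_act :: "(nat \<Rightarrow> nat) \<Rightarrow> (nat \<Rightarrow> real) \<Rightarrow> nat \<Rightarrow> real" where
  "perm_act \<sigma> x = (\<lambda>k. x (inv \<sigma> k))"

definition P_full :: "nat \<Rightarrow> (nat \<Rightarrow> real) set" where
  "P_full m = cvx_hull ({v_vec S | S. S \<subseteq> {0..<2*m+6} \<and> card S = m+1}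
      \<union> {w_vec (2*m+6) i j | i j. i < j \<and> j < 2*m+6})"

definition P_I :: "nat \<Rightarrow> (nat \<Rightarrow> real) set" where
  "P_I m = cvx_hull {v_vec S | S. S \<subseteq> {0..<2*m+6} \<and> card S = m+1}"

definition P_II :: "nat \<Rightarrow> (nat \<Rightarrow> real) set" where
  "P_II m = cvx_hull ({v_vec S | S. S \<subseteq> {1..<2*m+6} \<and> card S = m+1}
      \<union> {w_vec (2*m+6) 0 j | j. 1 \<le> j \<and> j < 2*m+6})"

definition P_III :: "nat \<Rightarrow> (nat \<Rightarrow> real) set" where
  "P_III m = cvx_hull ({v_vec S | S. S \<subseteq> {3..<2*m+6} \<and> card S = m+1}
      \<union> {w_vec (2*m+6) i j | i j. i < j \<and> j \<le> 2})"

end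

theory Submission
  imports Defs "HOL-Combinatorics.Permutations"
begin

text \<open>Every point of \<open>P^(m)\<close> can be written as \<open>x = z + M \<rho> - d\<close>, i.e. as
  \<open>(1 - M) p + M q\<close> with \<open>p = z / (1 - M)\<close> in the hypersimplex spanned by the \<open>v\<^sub>S\<close> and
  \<open>q = \<rho> - d / M\<close> in the convex hull of the \<open>w\<^sub>i\<^sub>j\<close>. Take such a decomposition with \<open>M\<close>
  minimal; the admissible values of \<open>M\<close> form a closed set, so the minimum exists. If \<open>M = 0\<close>
  then \<open>x \<in> P\<^sub>I\<close>. Otherwise, moving mass from \<open>d\<close> to \<open>z\<close> lowers \<open>M\<close> unless the support
  of \<open>d\<close> is rigid: either some coordinate has \<open>d = M\<close> and \<open>z = 0\<close>, which after a
  permutation exhibits \<open>x\<close> as a point of \<open>P\<^sub>I\<^sub>I\<close>, or \<open>d\<close> lives on exactly three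
  coordinates where \<open>z\<close> vanishes, which after a permutation gives a point of \<open>P\<^sub>I\<^sub>I\<^sub>I\<close>.
  The count showing that a non-rigid support always admits a descent direction is where the
  dimension \<open>2m + 6 = 2(m + 1) + 4\<close> enters.\<close>

lemma cvx_hull_mono: "A \<subseteq> B \<Longrightarrow> cvx_hull A \<subseteq> cvx_hull B"
  unfolding cvx_hull_def by blast

lemma cvx_hull_inc: "a \<in> A \<Longrightarrow> a \<in> cvx_hull A"
  unfolding cvx_hull_def
  by (rule CollectI, rule exI[of _ "{a}"], rule exI[of _ "\<lambda>_. 1"]) auto

lemma cvx_hull_convex_sum:
  assumes I: "finite I" "I \<noteq> {}" and c: "\<forall>i\<in>I. 0 \<le> c i" "sum c I = 1"
    and p: "\<forall>i\<in>I. p i \<in> cvx_hull A"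
  shows "(\<lambda>k. \<Sum>i\<in>I. c i * p i k) \<in> cvx_hull A"
proof -
  have "\<forall>i\<in>I. \<exists>F u. finite F \<and> F \<subseteq> A \<and> F \<noteq> {} \<and> (\<forall>a\<in>F. 0 \<le> u a) \<and>
      sum u F = 1 \<and> p i = (\<lambda>k. \<Sum>a\<in>F. u a * a k)"
    using p unfolding cvx_hull_def by blast
  then obtain F where "\<forall>i\<in>I. \<exists>u. finite (F i) \<and> F i \<subseteq> A \<and> F i \<noteq> {} \<and>
      (\<forall>a\<in>F i. 0 \<le> u a) \<and> sum u (F i) = 1 \<and> p i = (\<lambda>k. \<Sum>a\<in>F i. u a * a k)"
    by (auto dest!: bchoice)
  from bchoice[OF this] obtain u where Fu: "\<forall>i\<in>I. finite (F i) \<and> F i \<subseteq> A \<and> F i \<noteq> {} \<and>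
      (\<forall>a\<in>F i. 0 \<le> u i a) \<and> sum (u i) (F i) = 1 \<and> p i = (\<lambda>k. \<Sum>a\<in>F i. u i a * a k)"
    by blast
  define G where "G = (\<Union>i\<in>I. F i)"
  define v where "v a = (\<Sum>i\<in>I. c i * (if a \<in> F i then u i a else 0))" for a
  have fG: "finite G" unfolding G_def using I Fu by auto
  have restrict: "(\<Sum>a\<in>G. if a \<in> F i then f a else 0) = sum f (F i)" if "i \<in> I" for i f
    using sum.inter_restrict[OF fG, of f "F i"] that by (simp add: G_def Int_absorb1 UN_upper)
  have "G \<subseteq> A" "G \<noteq> {}" unfolding G_def using Fu I by auto
  moreover have "\<forall>a\<in>G. 0 \<le> v a" unfolding v_def using Fu c
    by (auto intro!: sum_nonneg mult_nonneg_nonneg)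
  moreover have "sum v G = 1"
  proof -
    have "sum v G = (\<Sum>i\<in>I. c i * (\<Sum>a\<in>G. if a \<in> F i then u i a else 0))"
      unfolding v_def by (subst sum.swap) (simp add: sum_distrib_left)
    also have "\<dots> = sum c I" using Fu by (simp add: restrict)
    finally show ?thesis using c by simp
  qed
  moreover have "(\<lambda>k. \<Sum>i\<in>I. c i * p i k) = (\<lambda>k. \<Sum>a\<in>G. v a * a k)"
  proof
    fix k
    have "(\<Sum>a\<in>G. v a * a k) = (\<Sum>i\<in>I. c i * (\<Sum>a\<in>G. if a \<in> F i then u i a * a k else 0))"
      unfolding v_def sum_distrib_right
      by (subst sum.swap) (auto simp add: sum_distrib_left intro!: sum.cong)
    also have "\<dots> = (\<Sum>i\<in>I. c i * p i k)" using Fu by (simp add: restrict)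
    finally show "(\<Sum>i\<in>I. c i * p i k) = (\<Sum>a\<in>G. v a * a k)" by simp
  qed
  ultimately show ?thesis unfolding cvx_hull_def using fG by blast
qed

lemma cvx_hull_segment:
  assumes "p \<in> cvx_hull A" "q \<in> cvx_hull A" "0 \<le> t" "t \<le> 1"
  shows "(\<lambda>k. t * p k + (1 - t) * q k) \<in> cvx_hull A"
  using cvx_hull_convex_sum[of "{True, False}" "\<lambda>i. if i then t else 1 - t" "\<lambda>i. if i then p else q" A]
    assms by simp

lemma cvx_hull_minimal:
  assumes "A \<subseteq> C"
    and segment: "\<And>x y t. x \<in> C \<Longrightarrow> y \<in> C \<Longrightarrow> 0 \<le> t \<Longrightarrow> t \<le> 1 \<Longrightarrow>
        (\<lambda>k. t * x k + (1 - t) * y k) \<in> C"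
  shows "cvx_hull A \<subseteq> C"
proof -
  have "(\<lambda>k. \<Sum>a\<in>F. u a * a k) \<in> C"
    if "finite F" "F \<noteq> {}" "F \<subseteq> A" "\<forall>a\<in>F. 0 \<le> u a" "sum u F = 1" for F u
    using that
  proof (induction F arbitrary: u rule: finite_ne_induct)
    case (singleton a)
    then show ?case using assms(1) by (simp add: subset_iff)
  next
    case (insert a F)
    define s where "s = sum u F"
    have s: "0 \<le> s" "u a = 1 - s" using insert by (auto simp: s_def intro: sum_nonneg)
    show ?case
    proof (cases "s = 0")
      case True
      then have "\<forall>b\<in>F. u b = 0"
        using insert.prems(2) insert.hyps(1) by (simp add: s_def sum_nonneg_eq_0_iff)
      then show ?thesis using insert s True assms(1) by (simp add: subset_iff)
    next
      case False
      have "(\<lambda>k. \<Sum>b\<in>F. u b / s * b k) \<in> C"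
        using insert s False by (intro insert.IH) (auto simp: s_def sum_divide_distrib[symmetric])
      then have "(\<lambda>k. u a * a k + (1 - u a) * (\<Sum>b\<in>F. u b / s * b k)) \<in> C"
        using insert s assms(1) by (intro segment) auto
      moreover have "(1 - u a) * (\<Sum>b\<in>F. u b / s * b k) = (\<Sum>b\<in>F. u b * b k)" for k
        using s False by (simp add: sum_distrib_left)
      ultimately show ?thesis using insert.hyps by simp
    qed
  qed
  then show ?thesis unfolding cvx_hull_def by blast
qed

lemma cvx_hull_image_subset:
  assumes "\<And>a. a \<in> A \<Longrightarrow> f a \<in> cvx_hull B"
    and "\<And>x y t. f (\<lambda>k. t * x k + (1 - t) * y k) = (\<lambda>k. t * f x k + (1 - t) * f y k)"
  shows "f ` cvx_hull A \<subseteq> cvx_hull B"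
proof -
  have "cvx_hull A \<subseteq> {x. f x \<in> cvx_hull B}"
    using assms by (intro cvx_hull_minimal) (auto intro: cvx_hull_segment)
  then show ?thesis by blast
qed

section \<open>Coordinate vectors and the hypersimplex\<close>

lemma e_vec_apply: "e_vec r k = (if k = r then 1 else 0)"
  by (simp add: e_vec_def)

lemma v_vec_apply: "finite S \<Longrightarrow> v_vec S k = (if k \<in> S then 1 else 0)"
  by (simp add: v_vec_def e_vec_def)

lemma rho_vec_apply: "rho_vec N k = (if k < N then 1/2 else 0)"
  unfolding rho_vec_def e_vec_def by (subst sum_distrib_left[symmetric]) simp

lemma sum_rho_vec: "(\<Sum>r<N. rho_vec N r) = real N / 2"
  by (simp add: rho_vec_apply)

lemma w_vec_apply:
  "w_vec N i j k = (if k < N then 1/2 else 0) - (if k = i then 1 else 0) - (if k = j then 1 else 0)"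
  by (simp add: w_vec_def rho_vec_apply e_vec_def)

lemma w_vec_commute: "w_vec N i j = w_vec N j i"
  by (auto simp add: w_vec_apply)

definition hypersimplex :: "nat set \<Rightarrow> nat \<Rightarrow> (nat \<Rightarrow> real) set" where
  "hypersimplex A k = {z. (\<forall>r\<in>A. 0 \<le> z r \<and> z r \<le> 1) \<and> (\<forall>r. r \<notin> A \<longrightarrow> z r = 0) \<and> sum z A = real k}"

lemma hypersimplex_shift:
  assumes A: "finite A" and z: "z \<in> hypersimplex A k" and ij: "i \<in> A" "j \<in> A" "i \<noteq> j"
    and frac: "0 < z i" "z i < 1" "0 < z j" "z j < 1"
  defines "z' \<equiv> \<lambda>r. z r + min (1 - z i) (z j) * (e_vec i r - e_vec j r)"
  shows "z' \<in> hypersimplex A k" "{r\<in>A. 0 < z' r \<and> z' r < 1} \<subset> {r\<in>A. 0 < z r \<and> z r < 1}"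
proof -
  define s where "s = min (1 - z i) (z j)"
  have s: "0 < s" "s \<le> 1 - z i" "s \<le> z j" "s = 1 - z i \<or> s = z j"
    using frac by (auto simp: s_def)
  have z'_i: "z' i = z i + s" and z'_j: "z' j = z j - s"
    and z'_other: "\<And>r. r \<noteq> i \<Longrightarrow> r \<noteq> j \<Longrightarrow> z' r = z r"
    using ij(3) by (auto simp: z'_def s_def e_vec_def)
  have "sum z' A = sum z A + s * (\<Sum>r\<in>A. e_vec i r - e_vec j r)"
    by (simp add: z'_def s_def sum.distrib sum_distrib_left)
  also have "(\<Sum>r\<in>A. e_vec i r - e_vec j r) = 0"
    using A ij by (simp add: sum_subtractf e_vec_def)
  finally have "sum z' A = real k" using z by (simp add: hypersimplex_def)
  moreover have "0 \<le> z' r \<and> z' r \<le> 1" if "r \<in> A" for r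
    using z that s frac z'_i z'_j z'_other[of r]
    by (cases "r = i"; cases "r = j") (auto simp: hypersimplex_def)
  moreover have "z' r = 0" if "r \<notin> A" for r
    using z that ij z'_other[of r] by (auto simp: hypersimplex_def)
  ultimately show "z' \<in> hypersimplex A k" by (simp add: hypersimplex_def)
  have "{r\<in>A. 0 < z' r \<and> z' r < 1} \<subseteq> {r\<in>A. 0 < z r \<and> z r < 1}"
    using frac z'_other by (smt (verit) mem_Collect_eq subsetI)
  moreover have "z' i = 1 \<or> z' j = 0" using s z'_i z'_j by auto
  ultimately show "{r\<in>A. 0 < z' r \<and> z' r < 1} \<subset> {r\<in>A. 0 < z r \<and> z r < 1}"
    using ij frac by fastforce
qed

lemma hypersimplex_no_fractional:
  assumes A: "finite A" and z: "z \<in> hypersimplex A k" and "{r\<in>A. 0 < z r \<and> z r < 1} = {}"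
  shows "z \<in> {v_vec S | S. S \<subseteq> A \<and> card S = k}"
proof -
  define S where "S = {r\<in>A. z r = 1}"
  have S: "S \<subseteq> A" "finite S" using A by (auto simp: S_def)
  have "z r = 0 \<or> z r = 1" if "r \<in> A" for r
    using assms that by (force simp: hypersimplex_def)
  then have z_eq: "z = v_vec S"
    using z S by (fastforce simp: hypersimplex_def S_def v_vec_apply)
  have "real k = (\<Sum>r\<in>A. if r \<in> S then 1 else 0)"
    using z S by (simp add: hypersimplex_def z_eq v_vec_apply)
  also have "\<dots> = real (card S)"
    using A S by (simp add: sum.If_cases Int_absorb1)
  finally show ?thesis using z_eq S by auto
qed

lemma hypersimplex_second_fractional:
  assumes A: "finite A" and z: "z \<in> hypersimplex A k"
    and i: "i \<in> A" "0 < z i" "z i < 1"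
  obtains j where "j \<in> A" "j \<noteq> i" "0 < z j" "z j < 1"
proof -
  have "\<exists>j. j \<in> A \<and> j \<noteq> i \<and> 0 < z j \<and> z j < 1"
  proof (rule ccontr)
    assume no_other: "\<nexists>j. j \<in> A \<and> j \<noteq> i \<and> 0 < z j \<and> z j < 1"
    have integral: "z r = 0 \<or> z r = 1" if "r \<in> A - {i}" for r
      using no_other that z by (force simp: hypersimplex_def)
    define T where "T = (A - {i}) \<inter> {r. z r = 1}"
    have "sum z (A - {i}) = (\<Sum>r\<in>A - {i}. if r \<in> T then 1 else 0)"
      by (rule sum.cong) (use integral in \<open>auto simp: T_def\<close>)
    also have "\<dots> = real (card T)"
      using A by (simp add: sum.If_cases T_def)
    finally have "real k = z i + real (card T)"
      using z i A by (simp add: hypersimplex_def sum.remove)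
    then have "card T < k" "k < card T + 1" using i by linarith+
    then show False by simp
  qed
  then show ?thesis using that by blast
qed

text \<open>Two fractional coordinates of \<open>z\<close> can be pushed in opposite directions until one of
  them becomes \<open>0\<close> or \<open>1\<close>; \<open>z\<close> lies on the segment between the two results, each of which has
  fewer fractional coordinates.\<close>

lemma hypersimplex_subset_cvx_hull:
  assumes A: "finite A"
  shows "hypersimplex A k \<subseteq> cvx_hull {v_vec S | S. S \<subseteq> A \<and> card S = k}"
proof
  fix z assume "z \<in> hypersimplex A k"
  then show "z \<in> cvx_hull {v_vec S | S. S \<subseteq> A \<and> card S = k}"
  proof (induction "card {r\<in>A. 0 < z r \<and> z r < 1}" arbitrary: z rule: less_induct)
    case less
    show ?case
    proof (cases "{r\<in>A. 0 < z r \<and> z r < 1} = {}")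
      case True
      show ?thesis by (rule cvx_hull_inc[OF hypersimplex_no_fractional[OF A less.prems True]])
    next
      case False
      then obtain i where i: "i \<in> A" "0 < z i" "z i < 1" by blast
      obtain j where j: "j \<in> A" "j \<noteq> i" "0 < z j" "z j < 1"
        using hypersimplex_second_fractional[OF A less.prems i] .
      define s where "s = min (1 - z i) (z j)"
      define t where "t = min (1 - z j) (z i)"
      define z1 where "z1 r = z r + s * (e_vec i r - e_vec j r)" for r
      define z2 where "z2 r = z r + t * (e_vec j r - e_vec i r)" for r
      have fin: "finite {r\<in>A. 0 < z r \<and> z r < 1}" using A by simp
      have z1: "z1 \<in> hypersimplex A k"
          "{r\<in>A. 0 < z1 r \<and> z1 r < 1} \<subset> {r\<in>A. 0 < z r \<and> z r < 1}"
        using hypersimplex_shift[OF A less.prems i(1) j(1) j(2)[symmetric] i(2,3) j(3,4)]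
        unfolding z1_def s_def by blast+
      have z2: "z2 \<in> hypersimplex A k"
          "{r\<in>A. 0 < z2 r \<and> z2 r < 1} \<subset> {r\<in>A. 0 < z r \<and> z r < 1}"
        using hypersimplex_shift[OF A less.prems j(1) i(1) j(2) j(3,4) i(2,3)]
        unfolding z2_def t_def by blast+
      have "z1 \<in> cvx_hull {v_vec S | S. S \<subseteq> A \<and> card S = k}"
        by (rule less.hyps[OF psubset_card_mono[OF fin z1(2)] z1(1)])
      moreover have "z2 \<in> cvx_hull {v_vec S | S. S \<subseteq> A \<and> card S = k}"
        by (rule less.hyps[OF psubset_card_mono[OF fin z2(2)] z2(1)])
      moreover have "0 < s" "0 < t" using i j by (auto simp: s_def t_def)
      ultimately have "(\<lambda>r. t / (s + t) * z1 r + (1 - t / (s + t)) * z2 r)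
          \<in> cvx_hull {v_vec S | S. S \<subseteq> A \<and> card S = k}"
        by (intro cvx_hull_segment) auto
      moreover have "t / (s + t) * z1 r + (1 - t / (s + t)) * z2 r = z r" for r
      proof -
        have "1 - t / (s + t) = s / (s + t)" using \<open>0 < s\<close> \<open>0 < t\<close> by (simp add: field_simps)
        then have "t / (s + t) * z1 r + (1 - t / (s + t)) * z2 r = (t * z1 r + s * z2 r) / (s + t)"
          by (simp add: add_divide_distrib)
        also have "t * z1 r + s * z2 r = (s + t) * z r" by (simp add: z1_def z2_def algebra_simps)
        finally show ?thesis using \<open>0 < s\<close> \<open>0 < t\<close> by simp
      qed
      ultimately show ?thesis by simp
    qed
  qed
qed

section \<open>The easy inclusion\<close>

definition full_generators :: "nat \<Rightarrow> (nat \<Rightarrow> real) set" where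
  "full_generators m = {v_vec S | S. S \<subseteq> {0..<2*m+6} \<and> card S = m+1}
      \<union> {w_vec (2*m+6) i j | i j. i < j \<and> j < 2*m+6}"

lemma P_full_eq: "P_full m = cvx_hull (full_generators m)"
  unfolding P_full_def full_generators_def ..

lemma perm_act_v_vec:
  assumes "\<sigma> permutes {0..<N}" "finite S"
  shows "perm_act \<sigma> (v_vec S) = v_vec (\<sigma> ` S)"
proof
  fix k
  have "inv \<sigma> k \<in> S \<longleftrightarrow> k \<in> \<sigma> ` S"
    using permutes_inverses[OF assms(1)] by (metis image_iff)
  then show "perm_act \<sigma> (v_vec S) k = v_vec (\<sigma> ` S) k"
    using assms by (simp add: perm_act_def v_vec_apply)
qed

lemma perm_act_w_vec:
  assumes "\<sigma> permutes {0..<N}"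
  shows "perm_act \<sigma> (w_vec N i j) = w_vec N (\<sigma> i) (\<sigma> j)"
proof
  fix k
  have "inv \<sigma> k < N \<longleftrightarrow> k < N"
    using permutes_in_image[OF permutes_inv[OF assms]] by simp
  moreover have "inv \<sigma> k = i \<longleftrightarrow> k = \<sigma> i" for i
    using permutes_inverses[OF assms] by metis
  ultimately show "perm_act \<sigma> (w_vec N i j) k = w_vec N (\<sigma> i) (\<sigma> j) k"
    by (simp add: perm_act_def w_vec_apply)
qed

lemma perm_act_full_generators:
  assumes \<sigma>: "\<sigma> permutes {0..<2*m+6}" and a: "a \<in> full_generators m"
  shows "perm_act \<sigma> a \<in> full_generators m"
  using a unfolding full_generators_def
proof (elim UnE CollectE exE conjE)
  fix S assume S: "a = v_vec S" "S \<subseteq> {0..<2*m+6}" "card S = m+1"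
  have "finite S" using S(2) finite_subset by blast
  moreover have "\<sigma> ` S \<subseteq> {0..<2*m+6}" using \<sigma> S(2) permutes_in_image by fastforce
  moreover have "card (\<sigma> ` S) = m+1"
    using S(3) card_image permutes_inj_on[OF \<sigma>] by metis
  ultimately show "perm_act \<sigma> a \<in> {v_vec S | S. S \<subseteq> {0..<2*m+6} \<and> card S = m+1}
      \<union> {w_vec (2*m+6) i j | i j. i < j \<and> j < 2*m+6}"
    using perm_act_v_vec[OF \<sigma>] S(1) by blast
next
  fix i j assume ij: "a = w_vec (2*m+6) i j" "i < j" "j < 2*m+6"
  have "\<sigma> i < 2*m+6" "\<sigma> j < 2*m+6" "\<sigma> i \<noteq> \<sigma> j"
    using ij \<sigma> permutes_in_image permutes_inj[OF \<sigma>] by (fastforce dest: injD)+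
  have "w_vec (2*m+6) (\<sigma> i) (\<sigma> j) \<in> {w_vec (2*m+6) i j | i j. i < j \<and> j < 2*m+6}"
  proof (cases "\<sigma> i < \<sigma> j")
    case False
    then have "\<sigma> j < \<sigma> i" using \<open>\<sigma> i \<noteq> \<sigma> j\<close> by simp
    then show ?thesis using \<open>\<sigma> i < 2*m+6\<close> w_vec_commute[of "2*m+6" "\<sigma> i"] by blast
  qed (use \<open>\<sigma> j < 2*m+6\<close> in blast)
  then show "perm_act \<sigma> a \<in> {v_vec S | S. S \<subseteq> {0..<2*m+6} \<and> card S = m+1}
      \<union> {w_vec (2*m+6) i j | i j. i < j \<and> j < 2*m+6}"
    unfolding ij(1) perm_act_w_vec[OF \<sigma>] by blast
qed

lemma perm_act_cvx_hull_subset_P_full: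
  assumes "\<sigma> permutes {0..<2*m+6}" "A \<subseteq> full_generators m"
  shows "perm_act \<sigma> ` cvx_hull A \<subseteq> P_full m"
  unfolding P_full_eq
proof (rule cvx_hull_image_subset)
  show "perm_act \<sigma> a \<in> cvx_hull (full_generators m)" if "a \<in> A" for a
    using that assms by (blast intro: cvx_hull_inc perm_act_full_generators)
qed (simp add: perm_act_def)

lemma vertex_set_mono:
  "A \<subseteq> B \<Longrightarrow> {v_vec S | S. S \<subseteq> A \<and> card S = k} \<subseteq> {v_vec S | S. S \<subseteq> B \<and> card S = k}"
  by blast

lemma P_I_subset_P_full: "P_I m \<subseteq> P_full m"
  unfolding P_full_eq P_I_def full_generators_def by (rule cvx_hull_mono) blast

lemma perm_act_P_II_subset_P_full:
  assumes "\<sigma> permutes {0..<2*m+6}"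
  shows "perm_act \<sigma> ` P_II m \<subseteq> P_full m"
  unfolding P_II_def
proof (rule perm_act_cvx_hull_subset_P_full[OF assms])
  have "{w_vec (2*m+6) 0 j | j. 1 \<le> j \<and> j < 2*m+6} \<subseteq> {w_vec (2*m+6) i j | i j. i < j \<and> j < 2*m+6}"
  proof
    fix a assume "a \<in> {w_vec (2*m+6) 0 j | j. 1 \<le> j \<and> j < 2*m+6}"
    then obtain j where "a = w_vec (2*m+6) 0 j" "0 < j" "j < 2*m+6" by auto
    then show "a \<in> {w_vec (2*m+6) i j | i j. i < j \<and> j < 2*m+6}" by blast
  qed
  then show "{v_vec S | S. S \<subseteq> {1..<2*m+6} \<and> card S = m+1}
      \<union> {w_vec (2*m+6) 0 j | j. 1 \<le> j \<and> j < 2*m+6} \<subseteq> full_generators m"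
    unfolding full_generators_def by (intro Un_mono vertex_set_mono) auto
qed

lemma perm_act_P_III_subset_P_full:
  assumes "\<sigma> permutes {0..<2*m+6}"
  shows "perm_act \<sigma> ` P_III m \<subseteq> P_full m"
  unfolding P_III_def
proof (rule perm_act_cvx_hull_subset_P_full[OF assms])
  have "{w_vec (2*m+6) i j | i j. i < j \<and> j \<le> 2} \<subseteq> {w_vec (2*m+6) i j | i j. i < j \<and> j < 2*m+6}"
  proof
    fix a assume "a \<in> {w_vec (2*m+6) i j | i j. i < j \<and> j \<le> 2}"
    then obtain i j where "a = w_vec (2*m+6) i j" "i < j" "j < 2*m+6" by auto
    then show "a \<in> {w_vec (2*m+6) i j | i j. i < j \<and> j < 2*m+6}" by blast
  qed
  then show "{v_vec S | S. S \<subseteq> {3..<2*m+6} \<and> card S = m+1}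
      \<union> {w_vec (2*m+6) i j | i j. i < j \<and> j \<le> 2} \<subseteq> full_generators m"
    unfolding full_generators_def by (intro Un_mono vertex_set_mono) auto
qed

section \<open>Decompositions\<close>

text \<open>\<open>decomposition m x M z d\<close> encodes \<open>x = (1 - M) (z / (1 - M)) + M (\<rho> - d / M)\<close>; see
  \<open>decomposition_in_cvx_hull\<close> for how the two points are placed in a convex hull.\<close>

definition decomposition :: "nat \<Rightarrow> (nat \<Rightarrow> real) \<Rightarrow> real \<Rightarrow> (nat \<Rightarrow> real) \<Rightarrow> (nat \<Rightarrow> real) \<Rightarrow> bool"
  where "decomposition m x M z d \<longleftrightarrow> 0 \<le> M \<and> M \<le> 1 \<and>
     (\<forall>r. 0 \<le> z r \<and> z r \<le> 1 - M \<and> 0 \<le> d r \<and> d r \<le> M) \<and>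
     (\<forall>r\<ge>2*m+6. z r = 0 \<and> d r = 0) \<and>
     (\<Sum>r<2*m+6. z r) = (1 - M) * real (m+1) \<and> (\<Sum>r<2*m+6. d r) = 2 * M \<and>
     x = (\<lambda>r. z r + M * rho_vec (2*m+6) r - d r)"

lemma decomposition_v_vec:
  assumes "S \<subseteq> {0..<2*m+6}" "card S = m+1"
  shows "decomposition m (v_vec S) 0 (v_vec S) (\<lambda>_. 0)"
proof -
  have "finite S" using assms(1) finite_subset by blast
  moreover have "(\<Sum>r<2*m+6. v_vec S r) = real (m+1)"
    using assms \<open>finite S\<close> by (simp add: v_vec_apply sum.If_cases lessThan_atLeast0 Int_absorb1)
  ultimately show ?thesis
    using assms(1) by (auto simp: decomposition_def v_vec_apply)
qed

lemma decomposition_w_vec: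
  assumes "i < j" "j < 2*m+6"
  shows "decomposition m (w_vec (2*m+6) i j) 1 (\<lambda>_. 0) (\<lambda>r. e_vec i r + e_vec j r)"
  using assms by (auto simp: decomposition_def e_vec_apply w_vec_apply rho_vec_apply sum.distrib)

lemma decomposition_segment:
  assumes x: "decomposition m x M z d" and y: "decomposition m y M' z' d'" and t: "0 \<le> t" "t \<le> 1"
  shows "decomposition m (\<lambda>k. t * x k + (1 - t) * y k) (t * M + (1 - t) * M')
      (\<lambda>r. t * z r + (1 - t) * z' r) (\<lambda>r. t * d r + (1 - t) * d' r)"
proof -
  have mix: "t * a + (1 - t) * a' \<le> t * b + (1 - t) * b'" if "a \<le> b" "a' \<le> b'" for a a' b b' :: real
    using t that by (intro add_mono mult_left_mono) auto
  have mix_sum: "(\<Sum>r<n. t * f r + (1 - t) * g r) = t * (\<Sum>r<n. f r) + (1 - t) * (\<Sum>r<n. g r)"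
    for f g :: "nat \<Rightarrow> real" and n by (simp add: sum.distrib sum_distrib_left)
  have X: "0 \<le> M" "M \<le> 1" "\<And>r. 0 \<le> z r" "\<And>r. z r \<le> 1 - M" "\<And>r. 0 \<le> d r" "\<And>r. d r \<le> M"
      "(\<Sum>r<2*m+6. z r) = (1 - M) * real (m+1)" "(\<Sum>r<2*m+6. d r) = 2 * M"
      "\<And>r. r \<ge> 2*m+6 \<Longrightarrow> z r = 0 \<and> d r = 0" "x = (\<lambda>r. z r + M * rho_vec (2*m+6) r - d r)"
    using x unfolding decomposition_def by blast+
  have Y: "0 \<le> M'" "M' \<le> 1" "\<And>r. 0 \<le> z' r" "\<And>r. z' r \<le> 1 - M'" "\<And>r. 0 \<le> d' r" "\<And>r. d' r \<le> M'"
      "(\<Sum>r<2*m+6. z' r) = (1 - M') * real (m+1)" "(\<Sum>r<2*m+6. d' r) = 2 * M'"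
      "\<And>r. r \<ge> 2*m+6 \<Longrightarrow> z' r = 0 \<and> d' r = 0" "y = (\<lambda>r. z' r + M' * rho_vec (2*m+6) r - d' r)"
    using y unfolding decomposition_def by blast+
  show ?thesis
    unfolding decomposition_def mix_sum X(7,8) Y(7,8)
    using mix[OF X(1) Y(1)] mix[OF X(2) Y(2)] mix[OF X(3) Y(3)] mix[OF X(4) Y(4)]
      mix[OF X(5) Y(5)] mix[OF X(6) Y(6)] X(9) Y(9)
    by (auto simp: X(10) Y(10) algebra_simps)
qed

lemma P_full_decomposition:
  assumes "x \<in> P_full m"
  obtains M z d where "decomposition m x M z d"
proof -
  have "P_full m \<subseteq> {x. \<exists>M z d. decomposition m x M z d}"
    unfolding P_full_eq
  proof (rule cvx_hull_minimal)
    show "full_generators m \<subseteq> {x. \<exists>M z d. decomposition m x M z d}"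
      unfolding full_generators_def using decomposition_v_vec decomposition_w_vec by blast
  qed (use decomposition_segment in blast)
  then show ?thesis using assms that by blast
qed

lemma decomposition_support_sum:
  assumes "decomposition m x M z d"
  shows "\<And>r. r \<ge> 2*m+6 \<Longrightarrow> x r = 0" "(\<Sum>r<2*m+6. x r) = real (m+1)"
proof -
  have x: "x = (\<lambda>r. z r + M * rho_vec (2*m+6) r - d r)"
    and sums: "(\<Sum>r<2*m+6. z r) = (1 - M) * real (m+1)" "(\<Sum>r<2*m+6. d r) = 2 * M"
    using assms unfolding decomposition_def by blast+
  show "x r = 0" if "r \<ge> 2*m+6" for r
    using assms that by (simp add: decomposition_def rho_vec_apply)
  have "(\<Sum>r<2*m+6. x r) = (1 - M) * real (m+1) + M * (real (2*m+6) / 2) - 2 * M"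
    by (simp add: x sum.distrib sum_subtractf sum_distrib_left[symmetric] sum_rho_vec sums)
  also have "\<dots> = real (m+1)" by (simp add: algebra_simps)
  finally show "(\<Sum>r<2*m+6. x r) = real (m+1)" .
qed

lemma decomposition_positive_part:
  assumes "decomposition m x M z d"
  shows "{r. 0 < d r} \<subseteq> {..<2*m+6}" "sum d {r. 0 < d r} = 2 * M"
proof -
  have d: "\<And>r. 0 \<le> d r" "\<And>r. r \<ge> 2*m+6 \<Longrightarrow> d r = 0" "(\<Sum>r<2*m+6. d r) = 2 * M"
    using assms unfolding decomposition_def by blast+
  show sub: "{r. 0 < d r} \<subseteq> {..<2*m+6}"
  proof
    fix r assume "r \<in> {r. 0 < d r}"
    then show "r \<in> {..<2*m+6}" using d(2)[of r] by (cases "r < 2*m+6") auto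
  qed
  have "sum d {r. 0 < d r} = sum d {..<2*m+6}"
    using sub d(1) by (intro sum.mono_neutral_left) (auto simp: less_le)
  then show "sum d {r. 0 < d r} = 2 * M" using d(3) by simp
qed

lemma sum_between_bounds:
  fixes lo hi :: "'a \<Rightarrow> real"
  assumes "finite I" "\<And>i. i \<in> I \<Longrightarrow> lo i \<le> hi i" "sum lo I \<le> s" "s \<le> sum hi I"
  obtains a where "\<And>i. i \<in> I \<Longrightarrow> lo i \<le> a i \<and> a i \<le> hi i" "sum a I = s" "\<And>i. i \<notin> I \<Longrightarrow> a i = 0"
proof
  define \<theta> where "\<theta> = (if sum hi I = sum lo I then 0 else (s - sum lo I) / (sum hi I - sum lo I))"
  define a where "a i = (if i \<in> I then lo i + \<theta> * (hi i - lo i) else 0)" for i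
  have \<theta>: "0 \<le> \<theta>" "\<theta> \<le> 1" using assms(3,4) by (auto simp: \<theta>_def divide_simps)
  show "lo i \<le> a i \<and> a i \<le> hi i" if "i \<in> I" for i
    using \<theta> assms(2)[OF that] mult_left_le_one_le[of "hi i - lo i" \<theta>] that by (simp add: a_def)
  have "sum a I = sum lo I + \<theta> * (sum hi I - sum lo I)"
    by (simp add: a_def sum.distrib sum_subtractf sum_distrib_left[symmetric])
  then show "sum a I = s" using assms(3,4) by (auto simp: \<theta>_def)
  show "a i = 0" if "i \<notin> I" for i using that by (simp add: a_def)
qed

text \<open>For fixed \<open>M\<close>, a decomposition exists iff a vector \<open>z\<close> with coordinatewise bounds
  and prescribed sum exists; these inequalities are the solvability condition, and they cut out a
  closed set of levels \<open>M\<close>.\<close>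

definition decomposable_level :: "nat \<Rightarrow> (nat \<Rightarrow> real) \<Rightarrow> real \<Rightarrow> bool" where
  "decomposable_level m x M \<longleftrightarrow> 0 \<le> M \<and> M \<le> 1 \<and>
     (\<forall>r<2*m+6. max 0 (x r - M/2) \<le> min (1 - M) (x r + M/2)) \<and>
     (\<Sum>r<2*m+6. max 0 (x r - M/2)) \<le> (1 - M) * real (m+1) \<and>
     (1 - M) * real (m+1) \<le> (\<Sum>r<2*m+6. min (1 - M) (x r + M/2))"

lemma decomposition_imp_decomposable_level:
  assumes "decomposition m x M z d"
  shows "decomposable_level m x M"
proof -
  have z_bounds: "max 0 (x r - M/2) \<le> z r" "z r \<le> min (1 - M) (x r + M/2)" for r
    using assms by (auto simp: decomposition_def rho_vec_apply)
  then have "(\<Sum>r<2*m+6. max 0 (x r - M/2)) \<le> (\<Sum>r<2*m+6. z r)"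
    "(\<Sum>r<2*m+6. z r) \<le> (\<Sum>r<2*m+6. min (1 - M) (x r + M/2))"
    by (simp_all add: sum_mono)
  moreover have "\<forall>r<2*m+6. max 0 (x r - M/2) \<le> min (1 - M) (x r + M/2)"
    using z_bounds order_trans by blast
  ultimately show ?thesis
    using assms unfolding decomposable_level_def decomposition_def by simp
qed

lemma decomposable_level_imp_decomposition:
  assumes level: "decomposable_level m x M"
    and x: "\<And>r. r \<ge> 2*m+6 \<Longrightarrow> x r = 0" "(\<Sum>r<2*m+6. x r) = real (m+1)"
  obtains z d where "decomposition m x M z d"
proof -
  obtain z where z: "\<And>r. r \<in> {..<2*m+6} \<Longrightarrow> max 0 (x r - M/2) \<le> z r \<and> z r \<le> min (1 - M) (x r + M/2)"
      "sum z {..<2*m+6} = (1 - M) * real (m+1)" "\<And>r. r \<notin> {..<2*m+6} \<Longrightarrow> z r = 0"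
    by (rule sum_between_bounds[of "{..<2*m+6}" "\<lambda>r. max 0 (x r - M/2)" "\<lambda>r. min (1 - M) (x r + M/2)"])
      (use level in \<open>auto simp: decomposable_level_def\<close>)
  define d where "d r = z r + M * rho_vec (2*m+6) r - x r" for r
  have "(\<Sum>r<2*m+6. d r) = (1 - M) * real (m+1) + M * (real (2*m+6) / 2) - real (m+1)"
    by (simp add: d_def sum.distrib sum_subtractf sum_distrib_left[symmetric] sum_rho_vec z(2) x(2))
  also have "\<dots> = 2 * M" by (simp add: algebra_simps)
  finally have "(\<Sum>r<2*m+6. d r) = 2 * M" .
  moreover have "0 \<le> z r \<and> z r \<le> 1 - M \<and> 0 \<le> d r \<and> d r \<le> M" for r
    using z(1,3)[of r] x(1)[of r] level
    by (cases "r < 2*m+6") (auto simp: d_def rho_vec_apply decomposable_level_def)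
  moreover have "z r = 0 \<and> d r = 0" if "r \<ge> 2*m+6" for r
    using z(3) x(1) that by (simp add: d_def rho_vec_apply)
  moreover have "x = (\<lambda>r. z r + M * rho_vec (2*m+6) r - d r)" by (simp add: d_def)
  ultimately have "decomposition m x M z d"
    using level z(2) unfolding decomposition_def decomposable_level_def by blast
  then show ?thesis by (rule that)
qed

lemma closed_decomposable_levels: "closed {M. decomposable_level m x M}"
proof -
  have "{M. decomposable_level m x M} = {M. 0 \<le> M} \<inter> {M. M \<le> 1} \<inter>
     (\<Inter>r\<in>{..<2*m+6}. {M. max 0 (x r - M/2) \<le> min (1 - M) (x r + M/2)}) \<inter>
     {M. (\<Sum>r<2*m+6. max 0 (x r - M/2)) \<le> (1 - M) * real (m+1)} \<inter>
     {M. (1 - M) * real (m+1) \<le> (\<Sum>r<2*m+6. min (1 - M) (x r + M/2))}"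
    unfolding decomposable_level_def by auto
  also have "closed \<dots>"
    by (intro closed_Int closed_INT ballI closed_Collect_le continuous_intros) auto
  finally show ?thesis .
qed

lemma minimal_decomposition:
  assumes "decomposition m x M\<^sub>0 z\<^sub>0 d\<^sub>0"
  obtains M z d where "decomposition m x M z d"
    "\<And>M' z' d'. decomposition m x M' z' d' \<Longrightarrow> M \<le> M'"
proof -
  define L where "L = {M. \<exists>z d. decomposition m x M z d}"
  have "L = {M. decomposable_level m x M}"
    using decomposition_imp_decomposable_level decomposable_level_imp_decomposition
      decomposition_support_sum[OF assms]
    unfolding L_def by metis
  then have "closed L" using closed_decomposable_levels by simp
  moreover have "L \<noteq> {}" "bdd_below L"
    using assms unfolding L_def decomposition_def by (auto intro: bdd_belowI[of _ 0])
  ultimately have "Inf L \<in> L" by (rule closed_contains_Inf[rotated 2])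
  moreover have "Inf L \<le> M'" if "decomposition m x M' z' d'" for M' z' d'
    using \<open>bdd_below L\<close> that unfolding L_def by (auto intro: cInf_lower)
  ultimately show ?thesis using that unfolding L_def by blast
qed

lemma decomposition_in_cvx_hull:
  assumes dec: "decomposition m x M z d"
    and z: "M < 1 \<Longrightarrow> (\<lambda>r. z r / (1 - M)) \<in> cvx_hull G"
    and d: "0 < M \<Longrightarrow> (\<lambda>r. rho_vec (2*m+6) r - d r / M) \<in> cvx_hull G"
  shows "x \<in> cvx_hull G"
proof -
  have M: "0 \<le> M" "M \<le> 1" and x: "x = (\<lambda>r. z r + M * rho_vec (2*m+6) r - d r)"
    and bounds: "\<And>r. 0 \<le> z r \<and> z r \<le> 1 - M \<and> 0 \<le> d r \<and> d r \<le> M"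
    using dec unfolding decomposition_def by blast+
  consider "M = 0" | "M = 1" | "0 < M" "M < 1" using M by linarith
  then show ?thesis
  proof cases
    case 1
    then have "d r = 0" for r using bounds[of r] by simp
    then have "x = (\<lambda>r. z r / (1 - M))" using 1 by (simp add: x)
    then show ?thesis using z 1 by simp
  next
    case 2
    then have "z r = 0" for r using bounds[of r] by simp
    then have "x = (\<lambda>r. rho_vec (2*m+6) r - d r / M)" using 2 by (simp add: x)
    then show ?thesis using d 2 by simp
  next
    case 3
    then have "(1 - M) * (z r / (1 - M)) = z r"
      "(1 - (1 - M)) * (rho_vec (2*m+6) r - d r / M) = M * rho_vec (2*m+6) r - d r" for r
      by (simp_all add: field_simps)
    then have "x = (\<lambda>r. (1 - M) * (z r / (1 - M)) + (1 - (1 - M)) * (rho_vec (2*m+6) r - d r / M))"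
      by (simp add: x add_diff_eq)
    moreover have "(\<lambda>r. (1 - M) * (z r / (1 - M)) + (1 - (1 - M)) * (rho_vec (2*m+6) r - d r / M))
        \<in> cvx_hull G"
      using z d 3 by (intro cvx_hull_segment) auto
    ultimately show ?thesis by (simp only:)
  qed
qed

lemma decomposition_z_in_cvx_hull:
  assumes dec: "decomposition m x M z d" and "M < 1" and B: "\<And>r. r \<in> B \<Longrightarrow> z r = 0"
  shows "(\<lambda>r. z r / (1 - M)) \<in> cvx_hull {v_vec S | S. S \<subseteq> {0..<2*m+6} - B \<and> card S = m+1}"
proof (rule subsetD[OF hypersimplex_subset_cvx_hull])
  have z: "\<And>r. 0 \<le> z r \<and> z r \<le> 1 - M" "\<And>r. r \<ge> 2*m+6 \<Longrightarrow> z r = 0"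
      "(\<Sum>r<2*m+6. z r) = (1 - M) * real (m+1)"
    using dec unfolding decomposition_def by blast+
  have "sum z ({0..<2*m+6} - B) = sum z {0..<2*m+6}"
    using B by (intro sum.mono_neutral_left) auto
  then have "sum (\<lambda>r. z r / (1 - M)) ({0..<2*m+6} - B) = real (m+1)"
    using z(3) \<open>M < 1\<close> by (simp add: sum_divide_distrib[symmetric] lessThan_atLeast0)
  then show "(\<lambda>r. z r / (1 - M)) \<in> hypersimplex ({0..<2*m+6} - B) (m+1)"
    using z(1,2) B \<open>M < 1\<close> by (auto simp: hypersimplex_def)
qed simp

lemma decomposition_in_P_I:
  assumes "decomposition m x 0 z d"
  shows "x \<in> P_I m"
  unfolding P_I_def
  by (rule decomposition_in_cvx_hull[OF assms])
    (use decomposition_z_in_cvx_hull[OF assms, of "{}"] in simp_all)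

lemma decomposition_in_P_II:
  assumes dec: "decomposition m x M z d" and "0 < M" "d 0 = M" "z 0 = 0"
  shows "x \<in> P_II m"
proof -
  let ?V = "{v_vec S | S. S \<subseteq> {1..<2*m+6} \<and> card S = m+1}"
  let ?W = "{w_vec (2*m+6) 0 j | j. 1 \<le> j \<and> j < 2*m+6}"
  have d: "\<And>r. 0 \<le> d r \<and> d r \<le> M" "\<And>r. r \<ge> 2*m+6 \<Longrightarrow> d r = 0" "(\<Sum>r<2*m+6. d r) = 2 * M"
    using dec unfolding decomposition_def by blast+
  have "{0..<2*m+6} - {0} = {1..<2*m+6}" by auto
  then have "M < 1 \<Longrightarrow> (\<lambda>r. z r / (1 - M)) \<in> cvx_hull ?V"
    using decomposition_z_in_cvx_hull[OF dec _, of "{0}"] \<open>z 0 = 0\<close> by simp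
  moreover have "(\<lambda>r. rho_vec (2*m+6) r - d r / M) \<in> cvx_hull ?W"
  proof -
    define y where "y r = d r / M - e_vec 0 r" for r
    have "sum d {0..<2*m+6} = d 0 + sum d {1..<2*m+6}"
      by (subst sum.atLeast_Suc_lessThan) auto
    then have "sum y {1..<2*m+6} = 1"
      using d(3) \<open>0 < M\<close> \<open>d 0 = M\<close>
      by (simp add: y_def e_vec_apply sum_divide_distrib[symmetric] lessThan_atLeast0)
    then have "y \<in> hypersimplex {1..<2*m+6} 1"
      using d(1,2) \<open>0 < M\<close> \<open>d 0 = M\<close> by (auto simp: hypersimplex_def y_def e_vec_apply)
    then have "y \<in> cvx_hull {v_vec S | S. S \<subseteq> {1..<2*m+6} \<and> card S = 1}"
      using hypersimplex_subset_cvx_hull by blast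
    moreover have "(\<lambda>v r. rho_vec (2*m+6) r - e_vec 0 r - v r)
        ` cvx_hull {v_vec S | S. S \<subseteq> {1..<2*m+6} \<and> card S = 1} \<subseteq> cvx_hull ?W"
    proof (rule cvx_hull_image_subset)
      fix v assume "v \<in> {v_vec S | S. S \<subseteq> {1..<2*m+6} \<and> card S = 1}"
      then obtain S where S: "v = v_vec S" "S \<subseteq> {1..<2*m+6}" "card S = 1" by blast
      then obtain j where "S = {j}" by (auto simp: card_1_singleton_iff)
      then have "v = v_vec {j}" "1 \<le> j" "j < 2*m+6" using S by auto
      then have "(\<lambda>r. rho_vec (2*m+6) r - e_vec 0 r - v r) = w_vec (2*m+6) 0 j"
        by (simp add: v_vec_def w_vec_def)
      then show "(\<lambda>r. rho_vec (2*m+6) r - e_vec 0 r - v r) \<in> cvx_hull ?W"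
        using \<open>1 \<le> j\<close> \<open>j < 2*m+6\<close> by (auto intro: cvx_hull_inc)
    qed (simp add: algebra_simps)
    ultimately have "(\<lambda>r. rho_vec (2*m+6) r - e_vec 0 r - y r) \<in> cvx_hull ?W" by blast
    then show ?thesis using \<open>0 < M\<close> by (simp add: y_def)
  qed
  ultimately show ?thesis
    unfolding P_II_def using cvx_hull_mono[of ?V "?V \<union> ?W"] cvx_hull_mono[of ?W "?V \<union> ?W"]
    by (intro decomposition_in_cvx_hull[OF dec]) blast+
qed

lemma decomposition_in_P_III:
  assumes dec: "decomposition m x M z d" and "{r. 0 < d r} = {0, 1, 2}" and "\<And>r. r < 3 \<Longrightarrow> z r = 0"
  shows "x \<in> P_III m"
proof -
  let ?V = "{v_vec S | S. S \<subseteq> {3..<2*m+6} \<and> card S = m+1}"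
  let ?W = "{w_vec (2*m+6) i j | i j. i < j \<and> j \<le> 2}"
  have d: "\<And>r. 0 \<le> d r \<and> d r \<le> M" "(\<Sum>r<2*m+6. d r) = 2 * M"
    using dec unfolding decomposition_def by blast+
  have "(\<lambda>r. z r / (1 - M)) \<in> cvx_hull {v_vec S | S. S \<subseteq> {0..<2*m+6} - {0, 1, 2} \<and> card S = m+1}"
    if "M < 1"
    by (rule decomposition_z_in_cvx_hull[OF dec that]) (use assms(3) in auto)
  moreover have "{0..<2*m+6} - {0, 1, 2} = {3..<2*m+6}" by auto
  ultimately have "M < 1 \<Longrightarrow> (\<lambda>r. z r / (1 - M)) \<in> cvx_hull ?V" by simp
  moreover have "(\<lambda>r. rho_vec (2*m+6) r - d r / M) \<in> cvx_hull ?W" if "0 < M"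
  proof -
    have outside: "d r = 0" if "r \<notin> {0, 1, 2}" for r
    proof -
      have "\<not> 0 < d r" using assms(2) that by blast
      with d(1)[of r] show ?thesis by simp
    qed
    have "sum d {0, 1, 2} = sum d {..<2*m+6}"
      using outside by (intro sum.mono_neutral_left) auto
    have "(\<lambda>r. d r / M) \<in> hypersimplex {0, 1, 2} 2"
      unfolding hypersimplex_def
    proof (intro CollectI conjI ballI allI impI)
      show "0 \<le> d r / M" "d r / M \<le> 1" for r using d(1)[of r] \<open>0 < M\<close> by simp_all
      show "d r / M = 0" if "r \<notin> {0, 1, 2}" for r using outside[OF that] by simp
      show "(\<Sum>r\<in>{0, 1, 2}. d r / M) = real 2"
        using \<open>sum d {0, 1, 2} = sum d {..<2*m+6}\<close> d(2) \<open>0 < M\<close>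
        by (simp only: sum_divide_distrib[symmetric]) simp
    qed
    then have "(\<lambda>r. d r / M) \<in> cvx_hull {v_vec S | S. S \<subseteq> {0, 1, 2} \<and> card S = 2}"
      using hypersimplex_subset_cvx_hull[of "{0, 1, 2}" 2] by blast
    moreover have "(\<lambda>v r. rho_vec (2*m+6) r - v r)
        ` cvx_hull {v_vec S | S. S \<subseteq> {0, 1, 2} \<and> card S = 2} \<subseteq> cvx_hull ?W"
    proof (rule cvx_hull_image_subset)
      fix v assume "v \<in> {v_vec S | S. S \<subseteq> {0, 1, 2} \<and> card S = 2}"
      then obtain S where S: "v = v_vec S" "S \<subseteq> {0, 1, 2}" "card S = 2" by blast
      obtain a b where ab: "S = {a, b}" "a \<noteq> b" using S(3) unfolding card_2_iff by blast
      obtain i j where ij: "S = {i, j}" "i < j"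
      proof (cases "a < b")
        case False
        then show ?thesis using that[of b a] ab by (simp add: insert_commute)
      qed (use that ab in blast)
      then have "v = v_vec {i, j}" "i < j" "j \<le> 2" using S by auto
      then have "(\<lambda>r. rho_vec (2*m+6) r - v r) = w_vec (2*m+6) i j"
        by (simp add: v_vec_def w_vec_def diff_diff_eq)
      then show "(\<lambda>r. rho_vec (2*m+6) r - v r) \<in> cvx_hull ?W"
        using \<open>i < j\<close> \<open>j \<le> 2\<close> by (auto intro: cvx_hull_inc)
    qed (simp add: algebra_simps)
    ultimately show ?thesis by blast
  qed
  ultimately show ?thesis
    unfolding P_III_def using cvx_hull_mono[of ?V "?V \<union> ?W"] cvx_hull_mono[of ?W "?V \<union> ?W"]
    by (intro decomposition_in_cvx_hull[OF dec]) blast+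
qed

lemma decomposition_permute:
  assumes dec: "decomposition m x M z d" and \<sigma>: "\<sigma> permutes {0..<2*m+6}"
  shows "decomposition m (x \<circ> \<sigma>) M (z \<circ> \<sigma>) (d \<circ> \<sigma>)"
proof -
  have fixed: "\<sigma> r = r" if "r \<ge> 2*m+6" for r
    using permutes_not_in[OF \<sigma>] that by simp
  have "\<sigma> r < 2*m+6 \<longleftrightarrow> r < 2*m+6" for r
    using permutes_in_image[OF \<sigma>, of r] by simp
  then have rho: "rho_vec (2*m+6) (\<sigma> r) = rho_vec (2*m+6) r" for r
    by (simp add: rho_vec_apply)
  have sums: "(\<Sum>r<2*m+6. f (\<sigma> r)) = (\<Sum>r<2*m+6. f r)" for f :: "nat \<Rightarrow> real"
    using sum.permute[OF \<sigma>, of f] by (simp add: lessThan_atLeast0)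
  show ?thesis
    using dec fixed unfolding decomposition_def by (simp add: sums rho comp_def)
qed

lemma mem_permuted_union:
  assumes "\<sigma> permutes {0..<N}" "x \<circ> \<sigma> \<in> P"
  shows "x \<in> (\<Union>\<sigma>\<in>{\<sigma>. \<sigma> permutes {0..<N}}. perm_act \<sigma> ` P)"
proof -
  have "perm_act \<sigma> (x \<circ> \<sigma>) = x"
    using permutes_inverses(1)[OF assms(1)] by (simp add: perm_act_def comp_def)
  then have "x \<in> perm_act \<sigma> ` P" using assms(2) by (metis imageI)
  with assms(1) show ?thesis by (intro UN_I[of \<sigma>]) simp_all
qed

lemma ex_permutes_image_initial_segment:
  assumes "T \<subseteq> {0..<N}" "card T = k"
  obtains \<sigma> where "\<sigma> permutes {0..<N}" "\<sigma> ` {0..<k} = T"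
proof -
  have fT: "finite T" "k \<le> N" using assms finite_subset card_mono[of "{0..<N}" T] by auto
  obtain f where f: "bij_betw f {0..<k} T"
    using finite_same_card_bij[of "{0..<k}" T] fT assms(2) by auto
  have "card ({0..<N} - T) = N - k" using assms fT by (simp add: card_Diff_subset)
  then obtain g where g: "bij_betw g {k..<N} ({0..<N} - T)"
    using finite_same_card_bij[of "{k..<N}" "{0..<N} - T"] by auto
  define \<sigma> where "\<sigma> i = (if i < k then f i else if i < N then g i else i)" for i
  have 1: "bij_betw \<sigma> {0..<k} T"
    using f by (rule bij_betw_cong[THEN iffD1, rotated]) (auto simp: \<sigma>_def)
  have 2: "bij_betw \<sigma> {k..<N} ({0..<N} - T)"
    using g by (rule bij_betw_cong[THEN iffD1, rotated]) (auto simp: \<sigma>_def)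
  have "bij_betw \<sigma> ({0..<k} \<union> {k..<N}) (T \<union> ({0..<N} - T))"
    by (rule bij_betw_combine[OF 1 2]) auto
  moreover have "{0..<k} \<union> {k..<N} = {0..<N}" "T \<union> ({0..<N} - T) = {0..<N}"
    using assms(1) fT(2) by auto
  ultimately have "\<sigma> permutes {0..<N}"
    by (intro bij_imp_permutes) (auto simp: \<sigma>_def)
  moreover have "\<sigma> ` {0..<k} = T" using 1 by (simp add: bij_betw_def)
  ultimately show ?thesis by (rule that)
qed

lemma decomposition_in_permuted_P_II:
  assumes dec: "decomposition m x M z d" and "0 < M" "d c = M" "z c = 0"
  shows "x \<in> (\<Union>\<sigma>\<in>{\<sigma>. \<sigma> permutes {0..<2*m+6}}. perm_act \<sigma> ` P_II m)"
proof -
  have "c < 2*m+6"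
  proof (rule ccontr)
    assume "\<not> c < 2*m+6"
    then have "d c = 0" using dec unfolding decomposition_def by simp
    then show False using assms(2,3) by simp
  qed
  then have \<sigma>: "Transposition.transpose 0 c permutes {0..<2*m+6}" by (intro permutes_swap_id) auto
  have "x \<circ> Transposition.transpose 0 c \<in> P_II m"
    using assms by (intro decomposition_in_P_II[OF decomposition_permute[OF dec \<sigma>]]) auto
  then show ?thesis by (rule mem_permuted_union[OF \<sigma>])
qed

lemma decomposition_in_permuted_P_III:
  assumes dec: "decomposition m x M z d"
    and card: "card {r. 0 < d r} = 3" and z: "\<And>r. 0 < d r \<Longrightarrow> z r = 0"
  shows "x \<in> (\<Union>\<sigma>\<in>{\<sigma>. \<sigma> permutes {0..<2*m+6}}. perm_act \<sigma> ` P_III m)"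
proof -
  have "{r. 0 < d r} \<subseteq> {0..<2*m+6}"
    using decomposition_positive_part(1)[OF dec] by (simp add: lessThan_atLeast0)
  then obtain \<sigma> where \<sigma>: "\<sigma> permutes {0..<2*m+6}" "\<sigma> ` {0..<3} = {r. 0 < d r}"
    using card by (rule ex_permutes_image_initial_segment)
  have "0 < d (\<sigma> r) \<longleftrightarrow> \<sigma> r \<in> \<sigma> ` {0..<3}" for r
    using \<sigma>(2) by simp
  then have "0 < d (\<sigma> r) \<longleftrightarrow> r < 3" for r
    using inj_image_mem_iff[OF permutes_inj[OF \<sigma>(1)]] by simp
  then have "{r. 0 < (d \<circ> \<sigma>) r} = {0, 1, 2}" "\<And>r. r < 3 \<Longrightarrow> (z \<circ> \<sigma>) r = 0"
    using z by auto
  then have "x \<circ> \<sigma> \<in> P_III m"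
    by (rule decomposition_in_P_III[OF decomposition_permute[OF dec \<sigma>(1)]])
  then show ?thesis by (rule mem_permuted_union[OF \<sigma>(1)])
qed

section \<open>Lowering a non-minimal decomposition\<close>

text \<open>Replacing \<open>z, d, M\<close> by \<open>z + \<delta> a, d + \<delta> a - \<delta> \<rho>, M - \<delta>\<close> keeps \<open>x\<close> fixed.
  The slopes \<open>a r\<close> admissible for small \<open>\<delta>\<close> lie between \<open>shift_lo\<close> and \<open>shift_hi\<close>,
  which depend on whether \<open>d r\<close> is \<open>0\<close>, \<open>M\<close> or strictly between, and whether \<open>z r = 0\<close>.\<close>

definition shift_lo :: "real \<Rightarrow> real \<Rightarrow> real \<Rightarrow> real" where
  "shift_lo M z d = (if d = 0 then 1/2 else if d = M then -1/2 else if z = 0 then 0 else -1)"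

definition shift_hi :: "real \<Rightarrow> real \<Rightarrow> real" where
  "shift_hi M d = (if d = 0 then 1/2 else if d = M then -1/2 else 1)"

lemma shift_lo_le_hi: "shift_lo M z d \<le> shift_hi M d"
  by (simp add: shift_lo_def shift_hi_def)

lemma coordinate_shift:
  fixes M z d a \<delta> :: real
  assumes "0 \<le> z" "z \<le> 1 - M" "0 \<le> d" "d \<le> M" "0 < M" "d = M \<Longrightarrow> 0 < z"
    and a: "shift_lo M z d \<le> a" "a \<le> shift_hi M d"
    and \<delta>: "0 < \<delta>" "2 * \<delta> \<le> M" "0 < z \<Longrightarrow> 2 * \<delta> \<le> z" "0 < d \<Longrightarrow> 2 * \<delta> \<le> d"
      "d < M \<Longrightarrow> 2 * \<delta> \<le> M - d"
  shows "0 \<le> z + \<delta> * a \<and> z + \<delta> * a \<le> 1 - (M - \<delta>) \<and> 0 \<le> d + \<delta> * a - \<delta> / 2 \<and> d + \<delta> * a - \<delta> / 2 \<le> M - \<delta>"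
proof -
  have slope: "\<delta> * shift_lo M z d \<le> \<delta> * a" "\<delta> * a \<le> \<delta> * shift_hi M d"
    using a \<open>0 < \<delta>\<close> by (simp_all add: mult_left_mono)
  consider "d = 0" | "d = M" | "0 < d" "d < M" "z = 0" | "0 < d" "d < M" "0 < z"
    using assms(1,3,4) by fastforce
  then show ?thesis
  proof cases
    case 1
    then have "\<delta> * a = \<delta> / 2" using a \<open>0 < M\<close> by (simp add: shift_lo_def shift_hi_def)
    then show ?thesis using 1 assms(1,2) \<delta> by (intro conjI; linarith)
  next
    case 2
    then have "\<delta> * a = - \<delta> / 2" using a \<open>0 < M\<close> by (simp add: shift_lo_def shift_hi_def)
    then show ?thesis using 2 assms(1,2,6) \<delta> by (intro conjI; linarith)
  next
    case 3
    then have "0 \<le> \<delta> * a" "\<delta> * a \<le> \<delta>" using slope by (simp_all add: shift_lo_def shift_hi_def)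
    then show ?thesis using 3 assms(2) \<delta> by (intro conjI; linarith)
  next
    case 4
    then have "- \<delta> \<le> \<delta> * a" "\<delta> * a \<le> \<delta>" using slope by (simp_all add: shift_lo_def shift_hi_def)
    then show ?thesis using 4 assms(2) \<delta> by (intro conjI; linarith)
  qed
qed

lemma sum_shift_hi_ge:
  assumes dec: "decomposition m x M z d" and "0 < M"
  shows "real (m+1) \<le> (\<Sum>r<2*m+6. shift_hi M (d r))"
proof -
  define D where "D = {r. d r = M}"
  note P = decomposition_positive_part[OF dec]
  have "finite {r. 0 < d r}" using P(1) finite_subset by blast
  have "D \<subseteq> {r. 0 < d r}" using \<open>0 < M\<close> by (auto simp: D_def)
  have "sum d D = sum (\<lambda>_. M) D" by (rule sum.cong) (simp_all add: D_def)
  then have "real (card D) * M = sum d D" by (simp only: sum_constant)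
  also have "\<dots> \<le> sum d {r. 0 < d r}"
    by (rule sum_mono2[OF \<open>finite _\<close> \<open>D \<subseteq> _\<close>]) simp
  finally have "card D \<le> 2" using P(2) \<open>0 < M\<close> by simp
  have "(\<Sum>r<2*m+6. 1/2 - shift_hi M (d r)) \<le> (\<Sum>r<2*m+6. of_bool (r \<in> D))"
    using \<open>0 < M\<close> by (intro sum_mono) (simp add: shift_hi_def D_def)
  also have "\<dots> = real (card ({..<2*m+6} \<inter> D))" by simp
  also have "\<dots> \<le> 2"
    using \<open>card D \<le> 2\<close> card_mono[of D "{..<2*m+6} \<inter> D"] \<open>finite {r. 0 < d r}\<close> \<open>D \<subseteq> _\<close>
    by (simp add: finite_subset)
  finally have "(\<Sum>r<2*m+6. 1/2 - shift_hi M (d r)) \<le> 2" .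
  moreover have "(\<Sum>r<2*m+6. 1/2 - shift_hi M (d r)) = real (m+3) - (\<Sum>r<2*m+6. shift_hi M (d r))"
    by (simp add: sum_subtractf)
  ultimately show ?thesis by linarith
qed

text \<open>Since \<open>2m + 6 = 2(m + 1) + 4\<close>, the lower slope bounds leave room for slopes summing to
  \<open>m + 1\<close> as soon as the following count reaches \<open>4\<close>.\<close>

lemma decomposition_support_count:
  assumes dec: "decomposition m x M z d" and "0 < M"
    and not_rigid: "\<not> (card {r. 0 < d r} \<le> 3 \<and> (\<forall>r. 0 < d r \<longrightarrow> z r = 0 \<and> d r < M))"
  shows "4 \<le> card {r. 0 < d r} + card {r. 0 < d r \<and> (d r = M \<or> 0 < z r)}"
proof -
  define P where "P = {r. 0 < d r}"
  define Q where "Q = {r. 0 < d r \<and> (d r = M \<or> 0 < z r)}"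
  have bounds: "\<And>r. 0 \<le> z r" "\<And>r. d r \<le> M"
    using dec unfolding decomposition_def by blast+
  have P: "P \<subseteq> {..<2*m+6}" "sum d P = 2 * M"
    using decomposition_positive_part[OF dec] unfolding P_def by blast+
  have "finite P" using P(1) by (rule finite_subset) simp
  have "Q \<subseteq> P" unfolding P_def Q_def by blast
  have "2 * M = sum d P" using P(2) by simp
  also have "\<dots> \<le> sum (\<lambda>_. M) P" by (intro sum_mono bounds(2))
  also have "\<dots> = real (card P) * M" by (rule sum_constant)
  finally have "2 \<le> card P" using \<open>0 < M\<close> by simp
  consider "card P = 2" | "card P = 3" | "4 \<le> card P" using \<open>2 \<le> card P\<close> by linarith
  then have "4 \<le> card P + card Q"
  proof cases
    case 1
    have "Q = P"
    proof (rule ccontr)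
      assume "Q \<noteq> P"
      then obtain r where "r \<in> P" "d r \<noteq> M" unfolding P_def Q_def by blast
      then have "d r < M" using bounds(2)[of r] by simp
      have "sum d P < sum (\<lambda>_. M) P"
        by (rule sum_strict_mono_ex1[OF \<open>finite P\<close>]) (use bounds(2) \<open>r \<in> P\<close> \<open>d r < M\<close> in auto)
      then show False using P(2) 1 by simp
    qed
    then show ?thesis using 1 by simp
  next
    case 2
    have "Q \<noteq> {}"
    proof
      assume "Q = {}"
      have "z r = 0 \<and> d r < M" if "0 < d r" for r
      proof -
        have "d r \<noteq> M" "\<not> 0 < z r" using \<open>Q = {}\<close> that unfolding Q_def by blast+
        then show ?thesis using bounds(1)[of r] bounds(2)[of r] by simp
      qed
      then show False using not_rigid 2 by (simp add: P_def)
    qed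
    moreover have "finite Q" using \<open>Q \<subseteq> P\<close> \<open>finite P\<close> by (rule finite_subset)
    ultimately have "1 \<le> card Q" by (simp add: Suc_le_eq card_gt_0_iff)
    then show ?thesis using 2 by simp
  qed simp
  then show ?thesis by (simp only: P_def Q_def)
qed

lemma sum_shift_lo_le:
  assumes dec: "decomposition m x M z d" and "0 < M"
    and not_rigid: "\<not> (card {r. 0 < d r} \<le> 3 \<and> (\<forall>r. 0 < d r \<longrightarrow> z r = 0 \<and> d r < M))"
  shows "(\<Sum>r<2*m+6. shift_lo M (z r) (d r)) \<le> real (m+1)"
proof -
  define P where "P = {r. 0 < d r}"
  define Q where "Q = {r. 0 < d r \<and> (d r = M \<or> 0 < z r)}"
  have bounds: "\<And>r. 0 \<le> z r" "\<And>r. d r \<le> M"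
    using dec unfolding decomposition_def by blast+
  have "P \<subseteq> {..<2*m+6}" "Q \<subseteq> {..<2*m+6}"
    using decomposition_positive_part(1)[OF dec] by (auto simp: P_def Q_def)
  then have cards: "{..<2*m+6} \<inter> P = P" "{..<2*m+6} \<inter> Q = Q" by auto
  have "4 / 2 \<le> (real (card P) + real (card Q)) / 2"
    using decomposition_support_count[OF assms] by (simp add: P_def Q_def)
  also have "\<dots> = (\<Sum>r<2*m+6. (of_bool (r \<in> P) + of_bool (r \<in> Q)) / 2)"
    by (simp add: sum.distrib sum_divide_distrib[symmetric] cards)
  also have "\<dots> \<le> (\<Sum>r<2*m+6. 1/2 - shift_lo M (z r) (d r))"
    using bounds \<open>0 < M\<close>
    by (intro sum_mono) (auto simp: shift_lo_def P_def Q_def less_le)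
  finally have "2 \<le> (\<Sum>r<2*m+6. 1/2 - shift_lo M (z r) (d r))" by simp
  moreover have "(\<Sum>r<2*m+6. 1/2 - shift_lo M (z r) (d r)) = real (m+3) - (\<Sum>r<2*m+6. shift_lo M (z r) (d r))"
    by (simp add: sum_subtractf)
  ultimately show ?thesis by linarith
qed

lemma ex_pos_le_finite:
  fixes Q :: "real set"
  assumes "finite Q"
  shows "\<exists>\<delta>>0. \<forall>q\<in>Q. 0 < q \<longrightarrow> \<delta> \<le> q"
proof (cases "{q\<in>Q. 0 < q} = {}")
  case True
  then show ?thesis by (intro exI[of _ 1]) auto
next
  case False
  have fin: "finite {q\<in>Q. 0 < q}" using assms by simp
  have "Min {q\<in>Q. 0 < q} \<in> {q\<in>Q. 0 < q}" using Min_in[OF fin False] .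
  moreover have "\<forall>q\<in>Q. 0 < q \<longrightarrow> Min {q\<in>Q. 0 < q} \<le> q"
    using Min_le[OF fin] by simp
  ultimately show ?thesis by blast
qed

lemma decomposition_reduce:
  assumes dec: "decomposition m x M z d" and "0 < M"
    and saturated_z_pos: "\<And>c. d c = M \<Longrightarrow> 0 < z c"
    and not_rigid: "\<not> (card {r. 0 < d r} \<le> 3 \<and> (\<forall>r. 0 < d r \<longrightarrow> z r = 0 \<and> d r < M))"
  obtains \<delta> z' d' where "0 < \<delta>" "decomposition m x (M - \<delta>) z' d'"
proof -
  let ?N = "2*m+6"
  have M: "M \<le> 1" and bounds: "\<And>r. 0 \<le> z r \<and> z r \<le> 1 - M \<and> 0 \<le> d r \<and> d r \<le> M"
    and outside: "\<And>r. r \<ge> ?N \<Longrightarrow> z r = 0 \<and> d r = 0"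
    and sums: "(\<Sum>r<?N. z r) = (1 - M) * real (m+1)" "(\<Sum>r<?N. d r) = 2 * M"
    and x: "x = (\<lambda>r. z r + M * rho_vec ?N r - d r)"
    using dec unfolding decomposition_def by blast+
  obtain a where a: "\<And>r. r \<in> {..<?N} \<Longrightarrow> shift_lo M (z r) (d r) \<le> a r \<and> a r \<le> shift_hi M (d r)"
      "sum a {..<?N} = real (m+1)" "\<And>r. r \<notin> {..<?N} \<Longrightarrow> a r = 0"
    using sum_between_bounds[OF finite_lessThan shift_lo_le_hi sum_shift_lo_le[OF dec \<open>0 < M\<close> not_rigid]
        sum_shift_hi_ge[OF dec \<open>0 < M\<close>]] by blast
  let ?Q = "insert M (z ` {..<?N} \<union> d ` {..<?N} \<union> (\<lambda>r. M - d r) ` {..<?N})"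
  have "finite ?Q" by simp
  then obtain \<delta>\<^sub>0 where \<delta>\<^sub>0: "0 < \<delta>\<^sub>0" "\<forall>q\<in>?Q. 0 < q \<longrightarrow> \<delta>\<^sub>0 \<le> q"
    using ex_pos_le_finite by blast
  define \<delta> where "\<delta> = \<delta>\<^sub>0 / 2"
  define z' where "z' r = z r + \<delta> * a r" for r
  define d' where "d' r = d r + \<delta> * a r - \<delta> * rho_vec ?N r" for r
  have \<delta>: "0 < \<delta>" "2 * \<delta> \<le> M" using \<delta>\<^sub>0 \<open>0 < M\<close> by (auto simp: \<delta>_def)
  have small: "0 < z r \<Longrightarrow> 2 * \<delta> \<le> z r" "0 < d r \<Longrightarrow> 2 * \<delta> \<le> d r"
      "d r < M \<Longrightarrow> 2 * \<delta> \<le> M - d r" if "r < ?N" for r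
    using \<delta>\<^sub>0(2) that by (simp_all add: \<delta>_def)
  have coord: "0 \<le> z' r \<and> z' r \<le> 1 - (M - \<delta>) \<and> 0 \<le> d' r \<and> d' r \<le> M - \<delta>" for r
  proof (cases "r < ?N")
    case True
    then have rho: "rho_vec ?N r = 1 / 2" by (simp add: rho_vec_apply)
    have "0 \<le> z r + \<delta> * a r \<and> z r + \<delta> * a r \<le> 1 - (M - \<delta>) \<and>
        0 \<le> d r + \<delta> * a r - \<delta> / 2 \<and> d r + \<delta> * a r - \<delta> / 2 \<le> M - \<delta>"
      by (rule coordinate_shift)
        (use bounds[of r] \<open>0 < M\<close> saturated_z_pos[of r] a(1)[of r] \<delta> small[OF True] True in auto)
    then show ?thesis by (simp add: z'_def d'_def rho)
  next
    case False
    then show ?thesis using outside[of r] a(3)[of r] M \<delta> by (simp add: z'_def d'_def rho_vec_apply)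
  qed
  have "(\<Sum>r<?N. z' r) = (1 - M) * real (m+1) + \<delta> * real (m+1)"
    using sums(1) a(2) by (simp add: z'_def sum.distrib sum_distrib_left[symmetric])
  then have sum_z': "(\<Sum>r<?N. z' r) = (1 - (M - \<delta>)) * real (m+1)" by (simp add: algebra_simps)
  have "(\<Sum>r<?N. rho_vec ?N r) = real (m+3)" using sum_rho_vec[of ?N] by simp
  then have "(\<Sum>r<?N. d' r) = 2 * M + \<delta> * real (m+1) - \<delta> * real (m+3)"
    using sums(2) a(2)
    by (simp add: d'_def sum.distrib sum_subtractf sum_distrib_left[symmetric])
  then have sum_d': "(\<Sum>r<?N. d' r) = 2 * (M - \<delta>)" by (simp add: algebra_simps)
  have outside': "z' r = 0 \<and> d' r = 0" if "r \<ge> ?N" for r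
    using outside[of r] a(3)[of r] that by (simp add: z'_def d'_def rho_vec_apply)
  have x': "x = (\<lambda>r. z' r + (M - \<delta>) * rho_vec ?N r - d' r)"
    by (simp add: x z'_def d'_def algebra_simps)
  have "0 \<le> M - \<delta>" "M - \<delta> \<le> 1" using M \<delta> by simp_all
  then have "decomposition m x (M - \<delta>) z' d'"
    unfolding decomposition_def using coord sum_z' sum_d' outside' x' by blast
  with \<open>0 < \<delta>\<close> show ?thesis by (rule that)
qed

lemma minimal_decomposition_cases:
  assumes dec: "decomposition m x M z d" and "0 < M"
    and minimal: "\<And>M' z' d'. decomposition m x M' z' d' \<Longrightarrow> M \<le> M'"
  obtains c where "d c = M" "z c = 0"
    | "card {r. 0 < d r} = 3" "\<And>r. 0 < d r \<Longrightarrow> z r = 0"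
proof -
  have z_nonneg: "\<And>r. 0 \<le> z r" using dec unfolding decomposition_def by blast
  show ?thesis
  proof (cases "\<exists>c. d c = M \<and> z c = 0")
    case True
    then show ?thesis using that(1) by blast
  next
    case False
    have saturated_z_pos: "0 < z c" if "d c = M" for c
      using False that z_nonneg[of c] by (auto simp: less_le)
    show ?thesis
    proof (cases "card {r. 0 < d r} \<le> 3 \<and> (\<forall>r. 0 < d r \<longrightarrow> z r = 0 \<and> d r < M)")
      case True
      define P where "P = {r. 0 < d r}"
      have P: "P \<subseteq> {..<2*m+6}" "sum d P = 2 * M"
        using decomposition_positive_part[OF dec] unfolding P_def by blast+
      have "finite P" using P(1) by (rule finite_subset) simp
      moreover have "P \<noteq> {}" using P(2) \<open>0 < M\<close> by auto
      moreover have "d r < M" if "r \<in> P" for r using True that by (simp add: P_def)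
      ultimately have "sum d P < sum (\<lambda>_. M) P" by (intro sum_strict_mono)
      then have "2 < card P" using P(2) \<open>0 < M\<close> by simp
      then show ?thesis using True that(2) by (simp add: P_def)
    next
      case False
      show ?thesis
      proof (rule decomposition_reduce[OF dec \<open>0 < M\<close> saturated_z_pos False])
        fix \<delta> z' d' assume "0 < \<delta>" "decomposition m x (M - \<delta>) z' d'"
        have "M \<le> M - \<delta>" using \<open>decomposition m x (M - \<delta>) z' d'\<close> by (rule minimal)
        then show ?thesis using \<open>0 < \<delta>\<close> by simp
      qed
    qed
  qed
qed

lemma minimal_decomposition_in_types:
  assumes dec: "decomposition m x M z d"
    and minimal: "\<And>M' z' d'. decomposition m x M' z' d' \<Longrightarrow> M \<le> M'"
  shows "x \<in> P_I m
     \<union> (\<Union>\<sigma>\<in>{\<sigma>. \<sigma> permutes {0..<2*m+6}}. perm_act \<sigma> ` P_II m)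
     \<union> (\<Union>\<sigma>\<in>{\<sigma>. \<sigma> permutes {0..<2*m+6}}. perm_act \<sigma> ` P_III m)"
proof (cases "M = 0")
  case True
  then have "x \<in> P_I m" using decomposition_in_P_I[of m x z d] dec by simp
  then show ?thesis by (rule UnI1[OF UnI1])
next
  case False
  then have "0 < M" using dec by (simp add: decomposition_def)
  then show ?thesis
  proof (rule minimal_decomposition_cases[OF dec _ minimal])
    fix c assume "d c = M" "z c = 0"
    then show ?thesis by (rule UnI1[OF UnI2[OF decomposition_in_permuted_P_II[OF dec \<open>0 < M\<close>]]])
  next
    assume "card {r. 0 < d r} = 3" "\<And>r. 0 < d r \<Longrightarrow> z r = 0"
    then show ?thesis by (rule UnI2[OF decomposition_in_permuted_P_III[OF dec]])
  qed
qed

theorem proposition5p6: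
  fixes m :: nat
  shows "P_full m = P_I m
     \<union> (\<Union>\<sigma>\<in>{\<sigma>. \<sigma> permutes {0..<2*m+6}}. perm_act \<sigma> ` P_II m)
     \<union> (\<Union>\<sigma>\<in>{\<sigma>. \<sigma> permutes {0..<2*m+6}}. perm_act \<sigma> ` P_III m)"
    (is "_ = ?U")
proof
  show "P_full m \<subseteq> ?U"
  proof
    fix x assume "x \<in> P_full m"
    then obtain M\<^sub>0 z\<^sub>0 d\<^sub>0 where "decomposition m x M\<^sub>0 z\<^sub>0 d\<^sub>0" by (rule P_full_decomposition)
    then show "x \<in> ?U" by (rule minimal_decomposition) (rule minimal_decomposition_in_types)
  qed
  show "?U \<subseteq> P_full m"
    using P_I_subset_P_full perm_act_P_II_subset_P_full perm_act_P_III_subset_P_full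
    by (intro Un_least UN_least) simp_all
qed

end
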